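(* Let $d\ge3$, $h\ge1$, $1\le n\le h$, and let $j$ be a vertex at distance $n$ from the root, with parent $p(j)$. Then in $G(d,h)$, $$\theta(d,h+2-n)\,\bar{\mathbf{x}}_j-\theta(d,h+1-n)\,\bar{\mathbf{x}}_{p(j)}=0,$$ where $\theta(d,m):=\frac{(d-1)^m-1}{d-2}$.
   Context: Let $\mathcal{T}(d,h)$ be the rooted tree in which the root $0$ has $d$ children, every vertex at distance $1,\dots,h-1$ from the root has $d-1$ children, and the vertices at distance $h$ are leaves. Let $V$ be its vertex set, $A$ its adjacency matrix, $\Delta := dI-A$, and $\Lambda\subset\mathbb{Z}^V$ the lattice spanned by the rows of $\Delta$. Then $G(d,h):=\mathbb{Z}^V/\Lambda$; $\{\mathbf{x}_i:i\in V\}$ is the standard basis of $\mathbb{Z}^V$ and $\bar{\mathbf{v}}$ denotes the image of $\mathbf{v}$ in $G(d,h)$. *)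

theory Defs
  imports Main
begin

text \<open>Vertices of T(d,h) are encoded as paths from the root: the root is [],
  and a vertex at distance k is a list [c1,...,ck] where c1 < d (choice among
  the d children of the root) and ci < d-1 for i >= 2 (choice among the d-1
  children of a non-root internal vertex).\<close>

definition tree_vertices :: "nat \<Rightarrow> nat \<Rightarrow> nat list set" where
  "tree_vertices d h = {xs. length xs \<le> h \<and>
      (\<forall>i < length xs. xs ! i < (if i = 0 then d else d - 1))}"

definition tree_parent :: "nat list \<Rightarrow> nat list" where
  "tree_parent v = butlast v"

definition tree_adj :: "nat \<Rightarrow> nat \<Rightarrow> nat list \<Rightarrow> nat list \<Rightarrow> bool" where
  "tree_adj d h u v \<longleftrightarrow> u \<in> tree_vertices d h \<and> v \<in> tree_vertices d h \<and>
      ((v \<noteq> [] \<and> u = tree_parent v) \<or> (u \<noteq> [] \<and> v = tree_parent u))"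

definition Delta :: "nat \<Rightarrow> nat \<Rightarrow> nat list \<Rightarrow> nat list \<Rightarrow> int" where
  "Delta d h i k = (if i = k \<and> i \<in> tree_vertices d h then int d else 0)
                   - (if tree_adj d h i k then 1 else 0)"

text \<open>The lattice Lambda in Z^V spanned (over Z) by the rows of Delta.
  Vectors in Z^V are functions nat list => int (vanishing off V).\<close>
definition Lambda :: "nat \<Rightarrow> nat \<Rightarrow> (nat list \<Rightarrow> int) set" where
  "Lambda d h = {v. \<exists>c :: nat list \<Rightarrow> int.
      v = (\<lambda>k. \<Sum>i\<in>tree_vertices d h. c i * Delta d h i k)}"

definition xvec :: "nat list \<Rightarrow> nat list \<Rightarrow> int" where
  "xvec i = (\<lambda>k. if k = i then 1 else 0)"

text \<open>theta(d,m) = ((d-1)^m - 1)/(d-2); the division is exact for d >= 3.\<close>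
definition theta :: "nat \<Rightarrow> nat \<Rightarrow> int" where
  "theta d m = ((int d - 1) ^ m - 1) div (int d - 2)"

end

theory Submission
  imports Defs
begin

text \<open>For a non-root vertex j the row of Delta reads
  d x_j - x_p(j) - (sum of x_c over the children c of j).
  Induct from the leaves upwards on m = h - |j|. At a leaf the claimed relation is the row itself,
  since theta(2) = d and theta(1) = 1. At an inner vertex, theta(m+1) times the row of j plus the
  relations theta(m+1) x_c - theta(m) x_j of its d - 1 children is the relation at j, by the
  recurrence theta(m+2) = d theta(m+1) - (d-1) theta(m).\<close>

lemma theta_eq_sum:
  assumes "d \<ge> 3"
  shows "theta d m = (\<Sum>i<m. (int d - 1) ^ i)"
proof -
  have "(int d - 1) ^ m - 1 = (int d - 2) * (\<Sum>i<m. (int d - 1) ^ i)"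
    using power_diff_1_eq[of "int d - 1" m] by simp
  then show ?thesis
    using assms by (simp add: theta_def)
qed

lemma theta_Suc: "d \<ge> 3 \<Longrightarrow> theta d (Suc m) = theta d m + (int d - 1) ^ m"
  by (simp add: theta_eq_sum)

lemma theta_recurrence:
  assumes "d \<ge> 3"
  shows "theta d (Suc (Suc m)) = int d * theta d (Suc m) - (int d - 1) * theta d m"
  using assms by (simp add: theta_Suc algebra_simps)

lemma finite_tree_vertices: "finite (tree_vertices d h)"
proof -
  have "tree_vertices d h \<subseteq> {xs. set xs \<subseteq> {..<d} \<and> length xs \<le> h}"
    unfolding tree_vertices_def by (force simp: in_set_conv_nth split: if_splits)
  then show ?thesis
    using finite_lists_length_le[of "{..<d}" h] finite_subset by blast
qed

lemma snoc_in_tree_vertices_iff: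
  "j @ [a] \<in> tree_vertices d h \<longleftrightarrow>
     j \<in> tree_vertices d h \<and> length j < h \<and> a < (if j = [] then d else d - 1)"
  unfolding tree_vertices_def by (auto simp: All_less_Suc nth_append)

lemma butlast_in_tree_vertices: "j \<in> tree_vertices d h \<Longrightarrow> butlast j \<in> tree_vertices d h"
  unfolding tree_vertices_def by (auto simp: nth_butlast)

lemma tree_adj_nonroot_iff:
  assumes "j \<in> tree_vertices d h" "j \<noteq> []"
  shows "tree_adj d h j k \<longleftrightarrow> k = butlast j \<or> (length j < h \<and> (\<exists>a<d - 1. k = j @ [a]))"
proof -
  have "k \<in> tree_vertices d h \<and> k \<noteq> [] \<and> butlast k = j \<longleftrightarrow> length j < h \<and> (\<exists>a<d - 1. k = j @ [a])"
  proof
    assume child: "k \<in> tree_vertices d h \<and> k \<noteq> [] \<and> butlast k = j"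
    then obtain a where k: "k = j @ [a]"
      by (metis append_butlast_last_id)
    with child have "length j < h" "a < d - 1"
      using assms(2) by (simp_all add: snoc_in_tree_vertices_iff)
    with k show "length j < h \<and> (\<exists>a<d - 1. k = j @ [a])"
      by blast
  next
    assume "length j < h \<and> (\<exists>a<d - 1. k = j @ [a])"
    then show "k \<in> tree_vertices d h \<and> k \<noteq> [] \<and> butlast k = j"
      using assms by (auto simp: snoc_in_tree_vertices_iff)
  qed
  then show ?thesis
    using assms butlast_in_tree_vertices[OF assms(1)] unfolding tree_adj_def tree_parent_def by auto
qed

lemma sum_xvec_snoc:
  "(\<Sum>a<m. xvec (j @ [a]) k) = (if \<exists>a<m. k = j @ [a] then 1 else 0)"
proof (cases "\<exists>a<m. k = j @ [a]")
  case True
  then obtain a where "a < m" "k = j @ [a]" by blast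
  then show ?thesis
    by (simp add: xvec_def sum.delta eq_commute[of "j @ [a]"])
next
  case False
  then show ?thesis by (auto simp: xvec_def intro: sum.neutral)
qed

lemma Delta_nonroot_row:
  assumes "j \<in> tree_vertices d h" "j \<noteq> []"
  shows "Delta d h j k = int d * xvec j k - xvec (butlast j) k
           - (if length j < h then \<Sum>a<d - 1. xvec (j @ [a]) k else 0)"
proof -
  have "butlast j \<noteq> j" "j @ [a] \<noteq> j" "j @ [a] \<noteq> butlast j" for a
    using assms(2) by (cases j rule: rev_cases; simp)+
  then show ?thesis
    using assms(1) unfolding Delta_def tree_adj_nonroot_iff[OF assms] sum_xvec_snoc
    by (auto simp: xvec_def)
qed

lemma Lambda_zero: "(\<lambda>k. 0) \<in> Lambda d h"
  unfolding Lambda_def by (auto intro: exI[of _ "\<lambda>i. 0"])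

lemma Lambda_add:
  assumes "f \<in> Lambda d h" "g \<in> Lambda d h"
  shows "(\<lambda>k. f k + g k) \<in> Lambda d h"
proof -
  obtain c c' where "f = (\<lambda>k. \<Sum>i\<in>tree_vertices d h. c i * Delta d h i k)"
      "g = (\<lambda>k. \<Sum>i\<in>tree_vertices d h. c' i * Delta d h i k)"
    using assms unfolding Lambda_def by blast
  then show ?thesis
    unfolding Lambda_def by (auto intro!: exI[of _ "\<lambda>i. c i + c' i"] simp: sum.distrib algebra_simps)
qed

lemma Lambda_mult:
  assumes "f \<in> Lambda d h"
  shows "(\<lambda>k. a * f k) \<in> Lambda d h"
proof -
  obtain c where "f = (\<lambda>k. \<Sum>i\<in>tree_vertices d h. c i * Delta d h i k)"
    using assms unfolding Lambda_def by blast
  then show ?thesis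
    unfolding Lambda_def by (auto intro!: exI[of _ "\<lambda>i. a * c i"] simp: sum_distrib_left algebra_simps)
qed

lemma Lambda_sum:
  assumes "finite A" "\<And>a. a \<in> A \<Longrightarrow> f a \<in> Lambda d h"
  shows "(\<lambda>k. \<Sum>a\<in>A. f a k) \<in> Lambda d h"
  using assms by (induction A rule: finite_induct) (simp_all add: Lambda_zero Lambda_add)

lemma Delta_row_in_Lambda:
  assumes "i \<in> tree_vertices d h"
  shows "Delta d h i \<in> Lambda d h"
proof -
  have "(\<Sum>i'\<in>tree_vertices d h. (if i' = i then 1 else 0) * Delta d h i' k)
      = (\<Sum>i'\<in>tree_vertices d h. if i' = i then Delta d h i' k else 0)" for k
    by (rule sum.cong) simp_all
  then have "Delta d h i = (\<lambda>k. \<Sum>i'\<in>tree_vertices d h. (if i' = i then 1 else 0) * Delta d h i' k)"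
    using assms by (simp add: finite_tree_vertices)
  then show ?thesis
    unfolding Lambda_def by (auto intro: exI[of _ "\<lambda>i'. if i' = i then 1 else 0"])
qed

lemma theta_relation_in_Lambda:
  assumes "d \<ge> 3" "j \<in> tree_vertices d h" "j \<noteq> []"
  shows "(\<lambda>k. theta d (h - length j + 2) * xvec j k - theta d (h - length j + 1) * xvec (butlast j) k)
           \<in> Lambda d h"
  using assms(2,3)
proof (induction "h - length j" arbitrary: j)
  case 0
  have "Delta d h j = (\<lambda>k. theta d (0 + 2) * xvec j k - theta d (0 + 1) * xvec (butlast j) k)"
  proof
    fix k
    have "theta d (0 + 2) = int d" "theta d (0 + 1) = 1"
      using assms(1) by (simp_all add: theta_eq_sum numeral_2_eq_2)
    then show "Delta d h j k = theta d (0 + 2) * xvec j k - theta d (0 + 1) * xvec (butlast j) k"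
      using 0 Delta_nonroot_row[of j d h k] by simp
  qed
  then show ?case
    using Delta_row_in_Lambda[OF 0(2)] unfolding 0(1)[symmetric] by simp
next
  case (Suc m)
  have "length j < h" using Suc.hyps(2) by simp
  have child: "(\<lambda>k. theta d (m + 2) * xvec (j @ [a]) k - theta d (m + 1) * xvec j k) \<in> Lambda d h"
    if "a < d - 1" for a
  proof -
    have m: "m = h - length (j @ [a])"
      using Suc.hyps(2) by simp
    have "j @ [a] \<in> tree_vertices d h"
      using Suc.prems \<open>length j < h\<close> that by (simp add: snoc_in_tree_vertices_iff)
    then show ?thesis
      using Suc.hyps(1)[OF m] unfolding m[symmetric] by simp
  qed
  have combination: "(\<lambda>k. theta d (Suc m + 1) * Delta d h j k
          + (\<Sum>a<d - 1. theta d (m + 2) * xvec (j @ [a]) k - theta d (m + 1) * xvec j k)) \<in> Lambda d h"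
    using Suc.prems(1) child
    by (intro Lambda_add Lambda_mult Delta_row_in_Lambda Lambda_sum) simp_all
  have "(\<lambda>k. theta d (Suc m + 2) * xvec j k - theta d (Suc m + 1) * xvec (butlast j) k)
      = (\<lambda>k. theta d (Suc m + 1) * Delta d h j k
          + (\<Sum>a<d - 1. theta d (m + 2) * xvec (j @ [a]) k - theta d (m + 1) * xvec j k))"
  proof
    fix k
    have rec: "theta d (Suc m + 2) = int d * theta d (m + 2) - (int d - 1) * theta d (m + 1)"
      using theta_recurrence[OF assms(1), of "m + 1"] by (simp add: numeral_2_eq_2)
    have sum: "(\<Sum>a<d - 1. theta d (m + 2) * xvec (j @ [a]) k - theta d (m + 1) * xvec j k)
        = theta d (m + 2) * (\<Sum>a<d - 1. xvec (j @ [a]) k) - (int d - 1) * theta d (m + 1) * xvec j k"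
      using assms(1) by (simp add: sum_subtractf sum_distrib_left of_nat_diff)
    have "Suc m + 1 = m + 2"
      by simp
    then show "theta d (Suc m + 2) * xvec j k - theta d (Suc m + 1) * xvec (butlast j) k
      = theta d (Suc m + 1) * Delta d h j k
          + (\<Sum>a<d - 1. theta d (m + 2) * xvec (j @ [a]) k - theta d (m + 1) * xvec j k)"
      unfolding rec sum Delta_nonroot_row[OF Suc.prems] if_P[OF \<open>length j < h\<close>]
      by (simp add: algebra_simps)
  qed
  with combination show ?case
    unfolding Suc.hyps(2)[symmetric] by (simp only:)
qed

theorem lemma7p1:
  fixes d h n :: nat and j :: "nat list"
  assumes "d \<ge> 3" and "h \<ge> 1" and "1 \<le> n" and "n \<le> h"
    and "j \<in> tree_vertices d h" and "length j = n"
  shows "(\<lambda>k. theta d (h + 2 - n) * xvec j k - theta d (h + 1 - n) * xvec (tree_parent j) k)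
           \<in> Lambda d h"
proof -
  have "h + 2 - n = h - length j + 2" "h + 1 - n = h - length j + 1"
    using assms(4,6) by simp_all
  moreover have "j \<noteq> []"
    using assms(3,6) by auto
  ultimately show ?thesis
    using theta_relation_in_Lambda[OF assms(1,5)] unfolding tree_parent_def by simp
qed

end
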